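(* Let $\mathcal C$ be a small exact category. The map $\gamma_{0,\mathcal C}:\mathsf{Cob}_0(\mathcal C)\to K_0(\mathcal C)$, $[M]\mapsto\sum_{b\in M}s(b)[X_b]$, is a well-defined isomorphism of abelian groups.
   Context: An exact category is an additive category $\mathcal C$ that is a full additive subcategory of an abelian category $\mathcal A$ with the following property: if $0\to X_1\to X_2\to X_3\to0$ is exact in $\mathcal A$ with $X_1,X_3$ in $\mathcal C$, then $X_2$ is isomorphic to an object of $\mathcal C$. Exact sequences in $\mathcal C$ are those exact sequences of $\mathcal A$ with all terms in $\mathcal C$. $K_0(\mathcal C)$ is generated by $[X]$, $X\in\mathrm{Ob}(\mathcal C)$, with $[X_2]=[X_1]+[X_3]$ for each exact sequence $0\to X_1\to X_2\to X_3\to 0$ in $\mathcal C$. A $\mathcal C$-decorated 0-foam is a finite set of points $b$, each with a sign $s(b)\in\{\pm1\}$ and an object $X_b\in\mathcal C$; $-M$ reverses signs. A $\mathcal C$-decorated 1-foam is a finite oriented graph (loops, multiple edges and circles allowed) with trivalent interior vertices. Each vertex is either "in" (two edges in, one out) or "out" (one in, two out); the two edges of equal orientation type are thin and the third is thick. The foam carries a flat connection with fibers objects of $\mathcal C$. At each vertex the thin edges are ordered, and an exact sequence $0\to X_{\mathrm{first}}\to X_{\mathrm{thick}}\to X_{\mathrm{second}}\to0$ in $\mathcal C$ of nearby fibers is fixed. Boundary points carry the fiber and sign $+$ if the edge points toward them, $-$ otherwise. A 1-foam $U$ is a cobordism from $M_0$ to $M_1$ if $\partial U\cong M_1\sqcup(-M_0)$.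 $\mathsf{Cob}_0(\mathcal C)$ is the set of $\mathcal C$-decorated 0-foams modulo the equivalence relation generated by cobordism, an abelian group under disjoint union. *)

theory Defs
  imports "HOL-Algebra.Free_Abelian_Groups" "HOL-Algebra.Coset" "HOL-Library.Multiset"
begin

text \<open>A small category: a set of objects, a set of arrows, domain, codomain,
  composition (cComp g f = g after f) and identities.\<close>
record ('o, 'm) cat =
  cOb   :: "'o set"
  cAr   :: "'m set"
  cDom  :: "'m \<Rightarrow> 'o"
  cCod  :: "'m \<Rightarrow> 'o"
  cComp :: "'m \<Rightarrow> 'm \<Rightarrow> 'm"
  cId   :: "'o \<Rightarrow> 'm"

definition is_category :: "('o, 'm) cat \<Rightarrow> bool" where
  "is_category C \<longleftrightarrow>
     (\<forall>f\<in>cAr C. cDom C f \<in> cOb C \<and> cCod C f \<in> cOb C) \<and>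
     (\<forall>x\<in>cOb C. cId C x \<in> cAr C \<and> cDom C (cId C x) = x \<and> cCod C (cId C x) = x) \<and>
     (\<forall>f\<in>cAr C. \<forall>g\<in>cAr C. cCod C f = cDom C g \<longrightarrow>
        cComp C g f \<in> cAr C \<and> cDom C (cComp C g f) = cDom C f \<and> cCod C (cComp C g f) = cCod C g) \<and>
     (\<forall>f\<in>cAr C. cComp C f (cId C (cDom C f)) = f \<and> cComp C (cId C (cCod C f)) f = f) \<and>
     (\<forall>f\<in>cAr C. \<forall>g\<in>cAr C. \<forall>h\<in>cAr C. cCod C f = cDom C g \<and> cCod C g = cDom C h \<longrightarrow>
        cComp C h (cComp C g f) = cComp C (cComp C h g) f)"

definition hom :: "('o, 'm) cat \<Rightarrow> 'o \<Rightarrow> 'o \<Rightarrow> 'm set" where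
  "hom C x y = {f \<in> cAr C. cDom C f = x \<and> cCod C f = y}"

definition zero_object :: "('o, 'm) cat \<Rightarrow> 'o \<Rightarrow> bool" where
  "zero_object C z \<longleftrightarrow> z \<in> cOb C \<and>
     (\<forall>x\<in>cOb C. (\<exists>!f. f \<in> hom C x z) \<and> (\<exists>!f. f \<in> hom C z x))"

definition zero_arrow :: "('o, 'm) cat \<Rightarrow> 'm \<Rightarrow> bool" where
  "zero_arrow C f \<longleftrightarrow> f \<in> cAr C \<and>
     (\<exists>z. zero_object C z \<and> (\<exists>a\<in>hom C (cDom C f) z. \<exists>b\<in>hom C z (cCod C f). f = cComp C b a))"

definition is_kernel :: "('o, 'm) cat \<Rightarrow> 'm \<Rightarrow> 'm \<Rightarrow> bool" where
  "is_kernel C k f \<longleftrightarrow> k \<in> cAr C \<and> f \<in> cAr C \<and> cCod C k = cDom C f \<and>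
     zero_arrow C (cComp C f k) \<and>
     (\<forall>h\<in>cAr C. cCod C h = cDom C f \<and> zero_arrow C (cComp C f h) \<longrightarrow>
        (\<exists>!u. u \<in> hom C (cDom C h) (cDom C k) \<and> cComp C k u = h))"

definition is_cokernel :: "('o, 'm) cat \<Rightarrow> 'm \<Rightarrow> 'm \<Rightarrow> bool" where
  "is_cokernel C c f \<longleftrightarrow> c \<in> cAr C \<and> f \<in> cAr C \<and> cDom C c = cCod C f \<and>
     zero_arrow C (cComp C c f) \<and>
     (\<forall>h\<in>cAr C. cDom C h = cCod C f \<and> zero_arrow C (cComp C h f) \<longrightarrow>
        (\<exists>!u. u \<in> hom C (cCod C c) (cCod C h) \<and> cComp C u c = h))"

definition is_mono :: "('o, 'm) cat \<Rightarrow> 'm \<Rightarrow> bool" where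
  "is_mono C f \<longleftrightarrow> f \<in> cAr C \<and>
     (\<forall>g\<in>cAr C. \<forall>h\<in>cAr C. cCod C g = cDom C f \<and> cCod C h = cDom C f \<and> cDom C g = cDom C h \<and>
        cComp C f g = cComp C f h \<longrightarrow> g = h)"

definition is_epi :: "('o, 'm) cat \<Rightarrow> 'm \<Rightarrow> bool" where
  "is_epi C f \<longleftrightarrow> f \<in> cAr C \<and>
     (\<forall>g\<in>cAr C. \<forall>h\<in>cAr C. cDom C g = cCod C f \<and> cDom C h = cCod C f \<and> cCod C g = cCod C h \<and>
        cComp C g f = cComp C h f \<longrightarrow> g = h)"

definition is_product :: "('o, 'm) cat \<Rightarrow> 'o \<Rightarrow> 'o \<Rightarrow> 'o \<Rightarrow> 'm \<Rightarrow> 'm \<Rightarrow> bool" where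
  "is_product C a b p p1 p2 \<longleftrightarrow> p1 \<in> hom C p a \<and> p2 \<in> hom C p b \<and>
     (\<forall>x\<in>cOb C. \<forall>f\<in>hom C x a. \<forall>g\<in>hom C x b.
        \<exists>!u. u \<in> hom C x p \<and> cComp C p1 u = f \<and> cComp C p2 u = g)"

definition is_coproduct :: "('o, 'm) cat \<Rightarrow> 'o \<Rightarrow> 'o \<Rightarrow> 'o \<Rightarrow> 'm \<Rightarrow> 'm \<Rightarrow> bool" where
  "is_coproduct C a b q i1 i2 \<longleftrightarrow> i1 \<in> hom C a q \<and> i2 \<in> hom C b q \<and>
     (\<forall>x\<in>cOb C. \<forall>f\<in>hom C a x. \<forall>g\<in>hom C b x.
        \<exists>!u. u \<in> hom C q x \<and> cComp C u i1 = f \<and> cComp C u i2 = g)"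

definition abelian :: "('o, 'm) cat \<Rightarrow> bool" where
  "abelian C \<longleftrightarrow> is_category C \<and> (\<exists>z. zero_object C z) \<and>
     (\<forall>a\<in>cOb C. \<forall>b\<in>cOb C. \<exists>p p1 p2. is_product C a b p p1 p2) \<and>
     (\<forall>a\<in>cOb C. \<forall>b\<in>cOb C. \<exists>q i1 i2. is_coproduct C a b q i1 i2) \<and>
     (\<forall>f\<in>cAr C. \<exists>k. is_kernel C k f) \<and>
     (\<forall>f\<in>cAr C. \<exists>c. is_cokernel C c f) \<and>
     (\<forall>f. is_mono C f \<longrightarrow> (\<exists>g. is_kernel C f g)) \<and>
     (\<forall>f. is_epi C f \<longrightarrow> (\<exists>g. is_cokernel C f g))"

definition iso_objects :: "('o, 'm) cat \<Rightarrow> 'o \<Rightarrow> 'o \<Rightarrow> bool" where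
  "iso_objects C x y \<longleftrightarrow> (\<exists>f\<in>hom C x y. \<exists>g\<in>hom C y x. cComp C g f = cId C x \<and> cComp C f g = cId C y)"

definition short_exact :: "('o, 'm) cat \<Rightarrow> 'm \<Rightarrow> 'm \<Rightarrow> bool" where
  "short_exact C f g \<longleftrightarrow> is_kernel C f g \<and> is_cokernel C g f"

text \<open>An exact category C, given as the object set S of a full subcategory of the
  abelian category A: additive (contains a zero object of A and, for any two of its
  objects, a product of them in A), and closed under extensions up to isomorphism.\<close>
definition exact_category :: "('o, 'm) cat \<Rightarrow> 'o set \<Rightarrow> bool" where
  "exact_category A S \<longleftrightarrow> abelian A \<and> S \<subseteq> cOb A \<and>
     (\<exists>z\<in>S. zero_object A z) \<and>
     (\<forall>x\<in>S. \<forall>y\<in>S. \<exists>p p1 p2. p \<in> S \<and> is_product A x y p p1 p2) \<and>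
     (\<forall>f g. short_exact A f g \<and> cDom A f \<in> S \<and> cCod A g \<in> S \<longrightarrow>
        (\<exists>y\<in>S. iso_objects A (cCod A f) y))"

definition exact_in :: "('o, 'm) cat \<Rightarrow> 'o set \<Rightarrow> 'm \<Rightarrow> 'm \<Rightarrow> bool" where
  "exact_in A S f g \<longleftrightarrow> short_exact A f g \<and> cDom A f \<in> S \<and> cCod A f \<in> S \<and> cCod A g \<in> S"

definition K0_free :: "'o set \<Rightarrow> ('o \<Rightarrow>\<^sub>0 int) monoid" where
  "K0_free S = free_Abelian_group S"

definition K0_rels :: "('o, 'm) cat \<Rightarrow> 'o set \<Rightarrow> ('o \<Rightarrow>\<^sub>0 int) set" where
  "K0_rels A S = {frag_of (cCod A f) - frag_of (cDom A f) - frag_of (cCod A g) | f g. exact_in A S f g}"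

definition K0 :: "('o, 'm) cat \<Rightarrow> 'o set \<Rightarrow> ('o \<Rightarrow>\<^sub>0 int) set monoid" where
  "K0 A S = K0_free S Mod generate (K0_free S) (K0_rels A S)"

definition K0_class :: "('o, 'm) cat \<Rightarrow> 'o set \<Rightarrow> ('o \<Rightarrow>\<^sub>0 int) \<Rightarrow> ('o \<Rightarrow>\<^sub>0 int) set" where
  "K0_class A S x = r_coset (K0_free S) (generate (K0_free S) (K0_rels A S)) x"

text \<open>A C-decorated 0-foam, up to isomorphism, is a finite multiset of points, each
  given by its sign (True = +1, False = -1) and its object.\<close>
type_synonym 'o foam0 = "(bool \<times> 'o) multiset"

definition valid_foam0 :: "'o set \<Rightarrow> 'o foam0 \<Rightarrow> bool" where
  "valid_foam0 S M \<longleftrightarrow> (\<forall>p\<in>#M. snd p \<in> S)"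

definition neg_foam0 :: "'o foam0 \<Rightarrow> 'o foam0" where
  "neg_foam0 M = image_mset (\<lambda>(s, X). (\<not> s, X)) M"

text \<open>A 1-foam: a finite oriented graph with vertex set fV and edge set fE (edge e goes
  from fSrc e to fTgt e), the trivialised flat connection (fiber fFib e along edge e),
  and at every interior vertex v the ordered thin edge-ends fFirst v, fSecond v, the thick
  edge-end fThick v, and an exact sequence given by fF v, fG v.  An edge-end is a pair
  (e, b): b = True is the head (target) end of e, b = False its tail (source) end.\<close>
record ('o, 'm) foam1 =
  fV      :: "nat set"
  fE      :: "nat set"
  fSrc    :: "nat \<Rightarrow> nat"
  fTgt    :: "nat \<Rightarrow> nat"
  fFib    :: "nat \<Rightarrow> 'o"
  fFirst  :: "nat \<Rightarrow> nat \<times> bool"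
  fSecond :: "nat \<Rightarrow> nat \<times> bool"
  fThick  :: "nat \<Rightarrow> nat \<times> bool"
  fF      :: "nat \<Rightarrow> 'm"
  fG      :: "nat \<Rightarrow> 'm"

definition end_vertex :: "('o, 'm) foam1 \<Rightarrow> nat \<times> bool \<Rightarrow> nat" where
  "end_vertex U eb = (if snd eb then fTgt U (fst eb) else fSrc U (fst eb))"

definition ends_at :: "('o, 'm) foam1 \<Rightarrow> nat \<Rightarrow> (nat \<times> bool) set" where
  "ends_at U v = {eb. fst eb \<in> fE U \<and> end_vertex U eb = v}"

definition boundary_vertices :: "('o, 'm) foam1 \<Rightarrow> nat set" where
  "boundary_vertices U = {v \<in> fV U. card (ends_at U v) = 1}"

definition interior_vertices :: "('o, 'm) foam1 \<Rightarrow> nat set" where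
  "interior_vertices U = {v \<in> fV U. card (ends_at U v) = 3}"

definition is_foam1 :: "('o, 'm) cat \<Rightarrow> 'o set \<Rightarrow> ('o, 'm) foam1 \<Rightarrow> bool" where
  "is_foam1 A S U \<longleftrightarrow> finite (fV U) \<and> finite (fE U) \<and>
     (\<forall>e\<in>fE U. fSrc U e \<in> fV U \<and> fTgt U e \<in> fV U \<and> fFib U e \<in> S) \<and>
     (\<forall>v\<in>fV U. card (ends_at U v) = 1 \<or> card (ends_at U v) = 3) \<and>
     (\<forall>v\<in>interior_vertices U.
        ends_at U v = {fFirst U v, fSecond U v, fThick U v} \<and>
        fFirst U v \<noteq> fSecond U v \<and> fFirst U v \<noteq> fThick U v \<and> fSecond U v \<noteq> fThick U v \<and>
        snd (fFirst U v) = snd (fSecond U v) \<and> snd (fThick U v) \<noteq> snd (fFirst U v) \<and>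
        exact_in A S (fF U v) (fG U v) \<and>
        cDom A (fF U v) = fFib U (fst (fFirst U v)) \<and>
        cCod A (fF U v) = fFib U (fst (fThick U v)) \<and>
        cCod A (fG U v) = fFib U (fst (fSecond U v)))"

text \<open>The boundary 0-foam: each univalent vertex, with the fiber of its edge and sign +
  iff the edge points toward it.\<close>
definition foam_boundary :: "('o, 'm) foam1 \<Rightarrow> 'o foam0" where
  "foam_boundary U = image_mset
     (\<lambda>v. let eb = the_elem (ends_at U v) in (snd eb, fFib U (fst eb)))
     (mset_set (boundary_vertices U))"

definition cobordant :: "('o, 'm) cat \<Rightarrow> 'o set \<Rightarrow> 'o foam0 \<Rightarrow> 'o foam0 \<Rightarrow> bool" where
  "cobordant A S M0 M1 \<longleftrightarrow> valid_foam0 S M0 \<and> valid_foam0 S M1 \<and>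
     (\<exists>U. is_foam1 A S U \<and> foam_boundary U = M1 + neg_foam0 M0)"

definition cob_equiv :: "('o, 'm) cat \<Rightarrow> 'o set \<Rightarrow> 'o foam0 \<Rightarrow> 'o foam0 \<Rightarrow> bool" where
  "cob_equiv A S M N \<longleftrightarrow> valid_foam0 S M \<and> valid_foam0 S N \<and> equivclp (cobordant A S) M N"

definition cob_class :: "('o, 'm) cat \<Rightarrow> 'o set \<Rightarrow> 'o foam0 \<Rightarrow> 'o foam0 set" where
  "cob_class A S M = {N. cob_equiv A S M N}"

definition Cob0 :: "('o, 'm) cat \<Rightarrow> 'o set \<Rightarrow> 'o foam0 set monoid" where
  "Cob0 A S = \<lparr>carrier = {cob_class A S M | M. valid_foam0 S M},
              monoid.mult = (\<lambda>P Q. {N. \<exists>M1\<in>P. \<exists>M2\<in>Q. cob_equiv A S (M1 + M2) N}),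
              one = cob_class A S {#}\<rparr>"

definition gamma0_rep :: "('o, 'm) cat \<Rightarrow> 'o set \<Rightarrow> 'o foam0 \<Rightarrow> ('o \<Rightarrow>\<^sub>0 int) set" where
  "gamma0_rep A S M = K0_class A S
     (sum_mset (image_mset (\<lambda>(s, X). if s then frag_of X else - frag_of X) M))"

definition gamma0 :: "('o, 'm) cat \<Rightarrow> 'o set \<Rightarrow> 'o foam0 set \<Rightarrow> ('o \<Rightarrow>\<^sub>0 int) set" where
  "gamma0 A S P = the_elem (gamma0_rep A S ` P)"

end

theory Submission
  imports Defs
begin

text \<open>
  Record a 0-foam by the signed sum of its decorations in the free abelian group on the
  objects. In a 1-foam every edge contributes its fiber once with each sign at its two ends,
  so the signed sum of the boundary is minus the sum over the trivalent vertices, and each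
  vertex contributes plus or minus a defining relation of K_0; hence gamma_0 is well defined.
  Disjoint union with a union of intervals makes cobordism compatible with addition, and
  M + (-M) bounds such a union, so Cob_0 is a group and gamma_0 a surjective homomorphism.
  Conversely [X] \<mapsto> [(+, X)] extends to the free abelian group and kills the relations,
  because the Y-shaped foam of an exact sequence is a null-cobordism of its three boundary
  points; this left inverse makes gamma_0 injective.
\<close>

section \<open>Disjoint union of 1-foams\<close>

definition trivalent_vertex :: "('o, 'm) cat \<Rightarrow> 'o set \<Rightarrow> ('o, 'm) foam1 \<Rightarrow> nat \<Rightarrow> bool" where
  "trivalent_vertex A S U v \<longleftrightarrow>
     ends_at U v = {fFirst U v, fSecond U v, fThick U v} \<and>
     fFirst U v \<noteq> fSecond U v \<and> fFirst U v \<noteq> fThick U v \<and> fSecond U v \<noteq> fThick U v \<and>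
     snd (fFirst U v) = snd (fSecond U v) \<and> snd (fThick U v) \<noteq> snd (fFirst U v) \<and>
     exact_in A S (fF U v) (fG U v) \<and>
     cDom A (fF U v) = fFib U (fst (fFirst U v)) \<and>
     cCod A (fF U v) = fFib U (fst (fThick U v)) \<and>
     cCod A (fG U v) = fFib U (fst (fSecond U v))"

lemma is_foam1_iff:
  "is_foam1 A S U \<longleftrightarrow> finite (fV U) \<and> finite (fE U) \<and>
     (\<forall>e\<in>fE U. fSrc U e \<in> fV U \<and> fTgt U e \<in> fV U \<and> fFib U e \<in> S) \<and>
     (\<forall>v\<in>fV U. card (ends_at U v) = 1 \<or> card (ends_at U v) = 3) \<and>
     (\<forall>v\<in>interior_vertices U. trivalent_vertex A S U v)"
  unfolding is_foam1_def trivalent_vertex_def ..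

definition copy_index :: "bool \<Rightarrow> nat \<Rightarrow> nat" where
  "copy_index b n = 2 * n + (if b then 0 else 1)"

lemma copy_index_simps [simp]:
  "even (copy_index b n) \<longleftrightarrow> b"
  "copy_index b n div 2 = n"
  "copy_index (even k) (k div 2) = k"
  "even k \<Longrightarrow> copy_index True (k div 2) = k"
  "odd k \<Longrightarrow> copy_index False (k div 2) = k"
  "copy_index b n = copy_index c m \<longleftrightarrow> b = c \<and> n = m"
  by (auto simp: copy_index_def) presburger+

definition summand :: "('o, 'm) foam1 \<Rightarrow> ('o, 'm) foam1 \<Rightarrow> nat \<Rightarrow> ('o, 'm) foam1" where
  "summand U W k = (if even k then U else W)"

text \<open>Vertices and edges of the two summands become the even and the odd numbers.\<close>
definition foam_union :: "('o, 'm) foam1 \<Rightarrow> ('o, 'm) foam1 \<Rightarrow> ('o, 'm) foam1" where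
  "foam_union U W =
    \<lparr>fV = copy_index True ` fV U \<union> copy_index False ` fV W,
     fE = copy_index True ` fE U \<union> copy_index False ` fE W,
     fSrc = \<lambda>e. copy_index (even e) (fSrc (summand U W e) (e div 2)),
     fTgt = \<lambda>e. copy_index (even e) (fTgt (summand U W e) (e div 2)),
     fFib = \<lambda>e. fFib (summand U W e) (e div 2),
     fFirst = \<lambda>v. apfst (copy_index (even v)) (fFirst (summand U W v) (v div 2)),
     fSecond = \<lambda>v. apfst (copy_index (even v)) (fSecond (summand U W v) (v div 2)),
     fThick = \<lambda>v. apfst (copy_index (even v)) (fThick (summand U W v) (v div 2)),
     fF = \<lambda>v. fF (summand U W v) (v div 2),
     fG = \<lambda>v. fG (summand U W v) (v div 2)\<rparr>"

lemma mem_copy_index_image [simp]: "k \<in> copy_index b ` X \<longleftrightarrow> even k = b \<and> k div 2 \<in> X"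
proof
  assume "even k = b \<and> k div 2 \<in> X"
  then show "k \<in> copy_index b ` X" by (auto intro: image_eqI[of _ _ "k div 2"])
qed auto

lemma foam_union_simps [simp]:
  "v \<in> fV (foam_union U W) \<longleftrightarrow> v div 2 \<in> fV (summand U W v)"
  "e \<in> fE (foam_union U W) \<longleftrightarrow> e div 2 \<in> fE (summand U W e)"
  "fSrc (foam_union U W) e = copy_index (even e) (fSrc (summand U W e) (e div 2))"
  "fTgt (foam_union U W) e = copy_index (even e) (fTgt (summand U W e) (e div 2))"
  "fFib (foam_union U W) e = fFib (summand U W e) (e div 2)"
  "fFirst (foam_union U W) v = apfst (copy_index (even v)) (fFirst (summand U W v) (v div 2))"
  "fSecond (foam_union U W) v = apfst (copy_index (even v)) (fSecond (summand U W v) (v div 2))"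
  "fThick (foam_union U W) v = apfst (copy_index (even v)) (fThick (summand U W v) (v div 2))"
  "fF (foam_union U W) v = fF (summand U W v) (v div 2)"
  "fG (foam_union U W) v = fG (summand U W v) (v div 2)"
  by (auto simp: foam_union_def summand_def)

lemma summand_copy_index [simp]: "summand U W (copy_index (even v) n) = summand U W v"
  by (simp add: summand_def)

lemma end_vertex_foam_union:
  "end_vertex (foam_union U W) eb =
     copy_index (even (fst eb)) (end_vertex (summand U W (fst eb)) (fst eb div 2, snd eb))"
  by (simp add: end_vertex_def foam_union_def)

lemma ends_at_foam_union:
  "ends_at (foam_union U W) v = apfst (copy_index (even v)) ` ends_at (summand U W v) (v div 2)"
proof (intro equalityI subsetI)
  fix eb assume "eb \<in> ends_at (foam_union U W) v"
  then have "even (fst eb) = even v" "fst eb div 2 \<in> fE (summand U W v)"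
    "end_vertex (summand U W v) (fst eb div 2, snd eb) = v div 2"
    by (auto simp: ends_at_def end_vertex_foam_union summand_def)
  then show "eb \<in> apfst (copy_index (even v)) ` ends_at (summand U W v) (v div 2)"
    by (intro image_eqI[of _ _ "(fst eb div 2, snd eb)"]) (auto simp: ends_at_def prod_eq_iff)
next
  fix eb assume "eb \<in> apfst (copy_index (even v)) ` ends_at (summand U W v) (v div 2)"
  then show "eb \<in> ends_at (foam_union U W) v"
    by (auto simp: ends_at_def end_vertex_foam_union summand_def)
qed

lemma card_ends_at_foam_union:
  "card (ends_at (foam_union U W) v) = card (ends_at (summand U W v) (v div 2))"
  unfolding ends_at_foam_union by (rule card_image) (auto simp: inj_on_def apfst_def map_prod_def split: prod.splits)

lemma foam_union_vertex_classes:
  "v \<in> boundary_vertices (foam_union U W) \<longleftrightarrow> v div 2 \<in> boundary_vertices (summand U W v)"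
  "v \<in> interior_vertices (foam_union U W) \<longleftrightarrow> v div 2 \<in> interior_vertices (summand U W v)"
  unfolding boundary_vertices_def interior_vertices_def mem_Collect_eq card_ends_at_foam_union
  by simp_all

lemma trivalent_vertex_foam_union:
  "trivalent_vertex A S (foam_union U W) v \<longleftrightarrow> trivalent_vertex A S (summand U W v) (v div 2)"
proof -
  let ?c = "apfst (copy_index (even v)) :: nat \<times> bool \<Rightarrow> nat \<times> bool"
  have inj: "inj ?c"
    by (auto simp: inj_def apfst_def map_prod_def split: prod.splits)
  have "?c ` E = {?c x, ?c y, ?c z} \<longleftrightarrow> E = {x, y, z}" for E x y z
    using inj_image_eq_iff[OF inj, of E "{x, y, z}"] by simp
  then show ?thesis
    unfolding trivalent_vertex_def ends_at_foam_union foam_union_simps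
    by (simp add: inj_eq[OF inj])
qed

lemma is_foam1_foam_union:
  assumes "is_foam1 A S U" "is_foam1 A S W"
  shows "is_foam1 A S (foam_union U W)"
proof -
  have summand: "is_foam1 A S (summand U W k)" for k
    using assms by (simp add: summand_def)
  have "fE (foam_union U W) = copy_index True ` fE U \<union> copy_index False ` fE W"
    "fV (foam_union U W) = copy_index True ` fV U \<union> copy_index False ` fV W"
    by (simp_all add: foam_union_def)
  then have "finite (fV (foam_union U W))" "finite (fE (foam_union U W))"
    using assms by (simp_all add: is_foam1_def)
  then show ?thesis
    unfolding is_foam1_iff
  proof (intro conjI ballI)
    fix e assume "e \<in> fE (foam_union U W)"
    then show "fSrc (foam_union U W) e \<in> fV (foam_union U W)"
      "fTgt (foam_union U W) e \<in> fV (foam_union U W)" "fFib (foam_union U W) e \<in> S"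
      using summand[of e] by (simp_all add: is_foam1_def)
  next
    fix v assume "v \<in> fV (foam_union U W)"
    then show "card (ends_at (foam_union U W) v) = 1 \<or> card (ends_at (foam_union U W) v) = 3"
      using summand[of v] by (simp add: is_foam1_def card_ends_at_foam_union)
  next
    fix v assume "v \<in> interior_vertices (foam_union U W)"
    then have "v div 2 \<in> interior_vertices (summand U W v)"
      by (simp add: foam_union_vertex_classes)
    then show "trivalent_vertex A S (foam_union U W) v"
      using summand[of v] unfolding trivalent_vertex_foam_union is_foam1_iff by blast
  qed
qed

lemma boundary_vertices_foam_union:
  "boundary_vertices (foam_union U W) =
     copy_index True ` boundary_vertices U \<union> copy_index False ` boundary_vertices W"
proof -
  have "k \<in> boundary_vertices (foam_union U W) \<longleftrightarrow>
      k \<in> copy_index True ` boundary_vertices U \<union> copy_index False ` boundary_vertices W" for k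
    by (cases "even k") (simp_all add: foam_union_vertex_classes summand_def)
  then show ?thesis by blast
qed

lemma finite_boundary_vertices: "is_foam1 A S U \<Longrightarrow> finite (boundary_vertices U)"
  by (simp add: is_foam1_def boundary_vertices_def)

lemma foam_boundary_foam_union:
  fixes U W :: "('o, 'm) foam1"
  assumes "is_foam1 A S U" "is_foam1 A S W"
  shows "foam_boundary (foam_union U W) = foam_boundary U + foam_boundary W"
proof -
  define point where "point Z v = (let eb = the_elem (ends_at Z v) in (snd eb, fFib Z (fst eb)))"
    for Z :: "('o, 'm) foam1" and v
  have point_union: "point (foam_union U W) (copy_index b v) = point Z v"
    if "Z = (if b then U else W)" "v \<in> boundary_vertices Z" for b v Z
  proof -
    have "card (ends_at Z v) = 1"
      using that(2) by (simp add: boundary_vertices_def)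
    then obtain eb where "ends_at Z v = {eb}" by (meson card_1_singletonE)
    then show ?thesis using that(1) by (simp add: point_def ends_at_foam_union summand_def)
  qed
  have fin: "finite (boundary_vertices U)" "finite (boundary_vertices W)"
    using assms finite_boundary_vertices by blast+
  have "mset_set (boundary_vertices (foam_union U W)) =
      image_mset (copy_index True) (mset_set (boundary_vertices U)) +
      image_mset (copy_index False) (mset_set (boundary_vertices W))"
    unfolding boundary_vertices_foam_union
    by (subst mset_set_Union) (use fin in \<open>auto simp: image_mset_mset_set inj_on_def\<close>)
  moreover have "image_mset (point (foam_union U W) \<circ> copy_index True) (mset_set (boundary_vertices U)) =
      image_mset (point U) (mset_set (boundary_vertices U))"
    by (rule image_mset_cong) (use fin in \<open>simp add: point_union\<close>)
  moreover have "image_mset (point (foam_union U W) \<circ> copy_index False) (mset_set (boundary_vertices W)) =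
      image_mset (point W) (mset_set (boundary_vertices W))"
    by (rule image_mset_cong) (use fin in \<open>simp add: point_union\<close>)
  moreover have "foam_boundary Z = image_mset (point Z) (mset_set (boundary_vertices Z))"
    for Z :: "('o, 'm) foam1"
    by (simp add: foam_boundary_def point_def[abs_def])
  ultimately show ?thesis
    by (simp add: multiset.map_comp)
qed

definition empty_foam :: "('o, 'm) foam1" where
  "empty_foam = \<lparr>fV = {}, fE = {}, fSrc = \<lambda>_. 0, fTgt = \<lambda>_. 0, fFib = \<lambda>_. undefined,
    fFirst = \<lambda>_. (0, False), fSecond = \<lambda>_. (0, False), fThick = \<lambda>_. (0, False),
    fF = \<lambda>_. undefined, fG = \<lambda>_. undefined\<rparr>"

lemma is_foam1_empty_foam: "is_foam1 A S empty_foam"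
  and foam_boundary_empty_foam: "foam_boundary empty_foam = {#}"
  by (auto simp: is_foam1_def empty_foam_def interior_vertices_def foam_boundary_def boundary_vertices_def)

definition interval_foam :: "'o \<Rightarrow> ('o, 'm) foam1" where
  "interval_foam X = \<lparr>fV = {0, 1}, fE = {0}, fSrc = \<lambda>_. 0, fTgt = \<lambda>_. 1, fFib = \<lambda>_. X,
    fFirst = \<lambda>_. (0, False), fSecond = \<lambda>_. (0, False), fThick = \<lambda>_. (0, False),
    fF = \<lambda>_. undefined, fG = \<lambda>_. undefined\<rparr>"

lemma interval_foam_simps [simp]:
  "fV (interval_foam X) = {0, 1}" "fE (interval_foam X) = {0}" "fFib (interval_foam X) e = X"
  "fSrc (interval_foam X) e = 0" "fTgt (interval_foam X) e = 1"
  by (simp_all add: interval_foam_def)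

lemma ends_at_interval_foam:
  "ends_at (interval_foam X) v = (if v = 0 then {(0, False)} else if v = 1 then {(0, True)} else {})"
  by (auto simp: ends_at_def end_vertex_def)

lemma is_foam1_interval_foam: "X \<in> S \<Longrightarrow> is_foam1 A S (interval_foam X)"
  by (auto simp: is_foam1_def interior_vertices_def ends_at_interval_foam)

lemma foam_boundary_interval_foam: "foam_boundary (interval_foam X) = {#(False, X), (True, X)#}"
proof -
  have bv: "boundary_vertices (interval_foam X) = {0, 1}"
    by (auto simp: boundary_vertices_def ends_at_interval_foam)
  show ?thesis unfolding foam_boundary_def bv by (simp add: ends_at_interval_foam)
qed

text \<open>The Y-shaped foam realising a single exact sequence: its one interior vertex has
  the thin edges 1 (first) and 3 (second) coming in and the thick edge 2 going out.\<close>
definition tripod_foam :: "('o, 'm) cat \<Rightarrow> 'm \<Rightarrow> 'm \<Rightarrow> ('o, 'm) foam1" where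
  "tripod_foam A f g = \<lparr>fV = {0, 1, 2, 3}, fE = {1, 2, 3},
    fSrc = \<lambda>e. if e = 2 then 0 else e, fTgt = \<lambda>e. if e = 2 then 2 else 0,
    fFib = \<lambda>e. if e = 1 then cDom A f else if e = 2 then cCod A f else cCod A g,
    fFirst = \<lambda>_. (1, True), fSecond = \<lambda>_. (3, True), fThick = \<lambda>_. (2, False),
    fF = \<lambda>_. f, fG = \<lambda>_. g\<rparr>"

lemma tripod_foam_simps [simp]:
  "fV (tripod_foam A f g) = {0, 1, 2, 3}" "fE (tripod_foam A f g) = {1, 2, 3}"
  "fSrc (tripod_foam A f g) e = (if e = 2 then 0 else e)"
  "fTgt (tripod_foam A f g) e = (if e = 2 then 2 else 0)"
  "fFib (tripod_foam A f g) e = (if e = 1 then cDom A f else if e = 2 then cCod A f else cCod A g)"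
  "fFirst (tripod_foam A f g) v = (1, True)" "fSecond (tripod_foam A f g) v = (3, True)"
  "fThick (tripod_foam A f g) v = (2, False)"
  "fF (tripod_foam A f g) v = f" "fG (tripod_foam A f g) v = g"
  by (simp_all add: tripod_foam_def)

lemma ends_at_tripod_foam: "ends_at (tripod_foam A f g) v =
   (if v = 0 then {(1, True), (2, False), (3, True)} else if v = 1 then {(1, False)}
    else if v = 2 then {(2, True)} else if v = 3 then {(3, False)} else {})"
  by (auto simp: ends_at_def end_vertex_def)

lemma is_foam1_tripod_foam: "exact_in A S f g \<Longrightarrow> is_foam1 A S (tripod_foam A f g)"
proof -
  assume "exact_in A S f g"
  moreover have "interior_vertices (tripod_foam A f g) = {0}"
    by (auto simp: interior_vertices_def ends_at_tripod_foam)
  ultimately show ?thesis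
    by (auto simp: is_foam1_def ends_at_tripod_foam exact_in_def)
qed

lemma foam_boundary_tripod_foam: "foam_boundary (tripod_foam A f g) =
    {#(False, cDom A f), (True, cCod A f), (False, cCod A g)#}"
proof -
  have bv: "boundary_vertices (tripod_foam A f g) = {1, 2, 3}"
    by (auto simp: boundary_vertices_def ends_at_tripod_foam)
  show ?thesis unfolding foam_boundary_def bv by (simp add: ends_at_tripod_foam)
qed

lemma neg_foam0_simps [simp]:
  "neg_foam0 {#} = {#}"
  "neg_foam0 (M + N) = neg_foam0 M + neg_foam0 N"
  "neg_foam0 (add_mset x M) = add_mset (\<not> fst x, snd x) (neg_foam0 M)"
  by (simp_all add: neg_foam0_def case_prod_beta)

lemma valid_foam0_simps [simp]:
  "valid_foam0 S {#}"
  "valid_foam0 S (M + N) \<longleftrightarrow> valid_foam0 S M \<and> valid_foam0 S N"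
  "valid_foam0 S (add_mset x M) \<longleftrightarrow> snd x \<in> S \<and> valid_foam0 S M"
  "valid_foam0 S (neg_foam0 M) \<longleftrightarrow> valid_foam0 S M"
  by (auto simp: valid_foam0_def neg_foam0_def)

lemma foam_bounding_double:
  fixes A :: "('o, 'm) cat"
  assumes "valid_foam0 S N"
  shows "\<exists>U. is_foam1 A S U \<and> foam_boundary U = N + neg_foam0 N"
  using assms
proof (induction N)
  case empty
  show ?case
    by (intro exI[of _ empty_foam]) (simp add: is_foam1_empty_foam foam_boundary_empty_foam)
next
  case (add x N)
  then obtain U where U: "is_foam1 A S U" "foam_boundary U = N + neg_foam0 N" by auto
  obtain s X where x: "x = (s, X)" by fastforce
  then have I: "is_foam1 A S (interval_foam X)"
    using add.prems by (simp add: is_foam1_interval_foam)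
  have "foam_boundary (foam_union U (interval_foam X)) = N + neg_foam0 N + {#(False, X), (True, X)#}"
    by (simp add: foam_boundary_foam_union[OF U(1) I] U(2) foam_boundary_interval_foam)
  also have "\<dots> = add_mset x N + neg_foam0 (add_mset x N)"
    unfolding x by (cases s) simp_all
  finally show ?case using is_foam1_foam_union[OF U(1) I] by blast
qed

lemma cobordant_add_right:
  fixes A :: "('o, 'm) cat"
  assumes "cobordant A S M M'" "valid_foam0 S N"
  shows "cobordant A S (M + N) (M' + N)"
proof -
  obtain U where U: "is_foam1 A S U" "foam_boundary U = M' + neg_foam0 M"
    using assms(1) by (auto simp: cobordant_def)
  obtain W :: "('o, 'm) foam1" where W: "is_foam1 A S W" "foam_boundary W = N + neg_foam0 N"
    using foam_bounding_double[OF assms(2)] by blast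
  have "foam_boundary (foam_union U W) = (M' + N) + neg_foam0 (M + N)"
    by (simp add: foam_boundary_foam_union[OF U(1) W(1)] U(2) W(2) ac_simps)
  then show ?thesis
    using assms is_foam1_foam_union[OF U(1) W(1)] by (auto simp: cobordant_def)
qed

section \<open>The cobordism group\<close>

lemma cob_equiv_refl: "valid_foam0 S M \<Longrightarrow> cob_equiv A S M M"
  by (simp add: cob_equiv_def)

lemma cob_equiv_sym: "cob_equiv A S M N \<Longrightarrow> cob_equiv A S N M"
  by (auto simp: cob_equiv_def intro: equivclp_sym)

lemma cob_equiv_trans: "cob_equiv A S M N \<Longrightarrow> cob_equiv A S N K \<Longrightarrow> cob_equiv A S M K"
  by (auto simp: cob_equiv_def intro: equivclp_trans)

lemma cob_equiv_of_cobordant: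
  assumes "cobordant A S M N"
  shows "cob_equiv A S M N"
proof -
  have "equivclp (cobordant A S) M N" using assms by (rule r_into_equivclp)
  with assms show ?thesis by (simp add: cob_equiv_def cobordant_def)
qed

lemma cob_equiv_add_right:
  assumes "cob_equiv A S M M'" "valid_foam0 S N"
  shows "cob_equiv A S (M + N) (M' + N)"
proof -
  have "equivclp (cobordant A S) M M'" using assms(1) by (simp add: cob_equiv_def)
  then have "equivclp (cobordant A S) (M + N) (M' + N)"
  proof (induction rule: equivclp_induct)
    case (step K L)
    then show ?case
      using cobordant_add_right[OF _ assms(2)] by (blast intro: equivclp_into_equivclp)
  qed simp
  then show ?thesis using assms by (simp add: cob_equiv_def)
qed

lemma cob_equiv_add:
  assumes "cob_equiv A S M M'" "cob_equiv A S N N'"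
  shows "cob_equiv A S (M + N) (M' + N')"
proof -
  have "cob_equiv A S (M + N) (M' + N)"
    using assms by (intro cob_equiv_add_right) (auto simp: cob_equiv_def)
  moreover have "cob_equiv A S (N + M') (N' + M')"
    using assms by (intro cob_equiv_add_right) (auto simp: cob_equiv_def)
  ultimately show ?thesis by (simp add: add.commute cob_equiv_trans)
qed

lemma cob_equiv_double_empty:
  fixes A :: "('o, 'm) cat"
  assumes "valid_foam0 S M"
  shows "cob_equiv A S (M + neg_foam0 M) {#}"
proof -
  obtain U :: "('o, 'm) foam1" where "is_foam1 A S U" "foam_boundary U = M + neg_foam0 M"
    using foam_bounding_double[OF assms] by blast
  then have "cobordant A S {#} (M + neg_foam0 M)"
    using assms by (auto simp: cobordant_def)
  then show ?thesis by (rule cob_equiv_sym[OF cob_equiv_of_cobordant])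
qed

lemma cob_class_eq_iff:
  "valid_foam0 S M \<Longrightarrow> cob_class A S M = cob_class A S N \<longleftrightarrow> cob_equiv A S M N"
proof
  assume "valid_foam0 S M" "cob_class A S M = cob_class A S N"
  moreover have "M \<in> cob_class A S M" using \<open>valid_foam0 S M\<close>
    by (simp add: cob_class_def cob_equiv_refl)
  ultimately have "M \<in> cob_class A S N" by simp
  then show "cob_equiv A S M N" by (simp add: cob_class_def cob_equiv_sym)
next
  assume "cob_equiv A S M N"
  then show "cob_class A S M = cob_class A S N"
    unfolding cob_class_def using cob_equiv_sym cob_equiv_trans by blast
qed

lemma carrier_Cob0: "carrier (Cob0 A S) = {cob_class A S M | M. valid_foam0 S M}"
  and one_Cob0: "\<one>\<^bsub>Cob0 A S\<^esub> = cob_class A S {#}"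
  by (simp_all add: Cob0_def)

lemma Cob0_mult_cob_class:
  assumes "valid_foam0 S M" "valid_foam0 S N"
  shows "cob_class A S M \<otimes>\<^bsub>Cob0 A S\<^esub> cob_class A S N = cob_class A S (M + N)"
proof -
  have "cob_equiv A S (M + N) K \<longleftrightarrow>
      (\<exists>M1. cob_equiv A S M M1 \<and> (\<exists>M2. cob_equiv A S N M2 \<and> cob_equiv A S (M1 + M2) K))" for K
  proof
    assume "cob_equiv A S (M + N) K"
    moreover have "cob_equiv A S M M" "cob_equiv A S N N"
      using assms by (simp_all add: cob_equiv_refl)
    ultimately show "\<exists>M1. cob_equiv A S M M1 \<and> (\<exists>M2. cob_equiv A S N M2 \<and> cob_equiv A S (M1 + M2) K)"
      by blast
  next
    assume "\<exists>M1. cob_equiv A S M M1 \<and> (\<exists>M2. cob_equiv A S N M2 \<and> cob_equiv A S (M1 + M2) K)"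
    then obtain M1 M2 where "cob_equiv A S M M1" "cob_equiv A S N M2" "cob_equiv A S (M1 + M2) K"
      by blast
    then show "cob_equiv A S (M + N) K" by (metis cob_equiv_add cob_equiv_trans)
  qed
  then show ?thesis by (simp add: Cob0_def cob_class_def)
qed

lemma Cob0_comm_group: "comm_group (Cob0 A S)"
proof (rule comm_groupI)
  fix x y z
  assume "x \<in> carrier (Cob0 A S)" "y \<in> carrier (Cob0 A S)" "z \<in> carrier (Cob0 A S)"
  then obtain M N K where MNK: "x = cob_class A S M" "y = cob_class A S N" "z = cob_class A S K"
    "valid_foam0 S M" "valid_foam0 S N" "valid_foam0 S K"
    by (auto simp: carrier_Cob0)
  then show "x \<otimes>\<^bsub>Cob0 A S\<^esub> y \<in> carrier (Cob0 A S)"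
    by (auto simp: Cob0_mult_cob_class carrier_Cob0 intro!: exI[of _ "M + N"])
  show "x \<otimes>\<^bsub>Cob0 A S\<^esub> y \<otimes>\<^bsub>Cob0 A S\<^esub> z = x \<otimes>\<^bsub>Cob0 A S\<^esub> (y \<otimes>\<^bsub>Cob0 A S\<^esub> z)"
    "x \<otimes>\<^bsub>Cob0 A S\<^esub> y = y \<otimes>\<^bsub>Cob0 A S\<^esub> x"
    using MNK by (simp_all add: Cob0_mult_cob_class ac_simps)
next
  show "\<one>\<^bsub>Cob0 A S\<^esub> \<in> carrier (Cob0 A S)" by (auto simp: carrier_Cob0 one_Cob0)
next
  fix x assume "x \<in> carrier (Cob0 A S)"
  then obtain M where M: "x = cob_class A S M" "valid_foam0 S M" by (auto simp: carrier_Cob0)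
  then show "\<one>\<^bsub>Cob0 A S\<^esub> \<otimes>\<^bsub>Cob0 A S\<^esub> x = x"
    by (simp add: one_Cob0 Cob0_mult_cob_class)
  have "cob_class A S (neg_foam0 M) \<otimes>\<^bsub>Cob0 A S\<^esub> x = \<one>\<^bsub>Cob0 A S\<^esub>"
    using M cob_equiv_double_empty[OF M(2)]
    by (simp add: one_Cob0 Cob0_mult_cob_class cob_class_eq_iff add.commute)
  moreover have "cob_class A S (neg_foam0 M) \<in> carrier (Cob0 A S)"
    using M by (auto simp: carrier_Cob0)
  ultimately show "\<exists>y\<in>carrier (Cob0 A S). y \<otimes>\<^bsub>Cob0 A S\<^esub> x = \<one>\<^bsub>Cob0 A S\<^esub>" by blast
qed

lemma Cob0_inv_cob_class:
  assumes "valid_foam0 S M"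
  shows "inv\<^bsub>Cob0 A S\<^esub> cob_class A S M = cob_class A S (neg_foam0 M)"
proof -
  interpret comm_group "Cob0 A S" by (rule Cob0_comm_group)
  show ?thesis
  proof (rule inv_equality)
    show "cob_class A S (neg_foam0 M) \<otimes>\<^bsub>Cob0 A S\<^esub> cob_class A S M = \<one>\<^bsub>Cob0 A S\<^esub>"
      using assms cob_equiv_double_empty[OF assms]
      by (simp add: one_Cob0 Cob0_mult_cob_class cob_class_eq_iff add.commute)
  qed (use assms in \<open>auto simp: carrier_Cob0\<close>)
qed

lemma group_hom_Cob0:
  "\<psi> \<in> Group.hom G (Cob0 A S) \<Longrightarrow> group G \<Longrightarrow> group_hom G (Cob0 A S) \<psi>"
  using Cob0_comm_group[of A S] by (simp add: group_hom_def group_hom_axioms_def comm_group_def)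

definition signed_sum :: "'o foam0 \<Rightarrow> 'o \<Rightarrow>\<^sub>0 int" where
  "signed_sum M = sum_mset (image_mset (\<lambda>(s, X). if s then frag_of X else - frag_of X) M)"

definition K0_rel_subgroup :: "('o, 'm) cat \<Rightarrow> 'o set \<Rightarrow> ('o \<Rightarrow>\<^sub>0 int) set" where
  "K0_rel_subgroup A S = generate (free_Abelian_group S) (K0_rels A S)"

lemma K0_eq: "K0 A S = free_Abelian_group S Mod K0_rel_subgroup A S"
  by (simp add: K0_def K0_free_def K0_rel_subgroup_def)

lemma gamma0_rep_eq:
  "gamma0_rep A S M = K0_rel_subgroup A S #>\<^bsub>free_Abelian_group S\<^esub> signed_sum M"
  by (simp add: gamma0_rep_def K0_class_def K0_free_def K0_rel_subgroup_def signed_sum_def)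

lemma signed_sum_simps [simp]:
  "signed_sum {#} = 0"
  "signed_sum (M + N) = signed_sum M + signed_sum N"
  "signed_sum (add_mset x M) = (if fst x then frag_of (snd x) else - frag_of (snd x)) + signed_sum M"
  by (simp_all add: signed_sum_def case_prod_beta)

lemma signed_sum_neg_foam0 [simp]: "signed_sum (neg_foam0 M) = - signed_sum M"
  by (induction M) simp_all

lemma signed_sum_in_carrier: "valid_foam0 S M \<Longrightarrow> signed_sum M \<in> carrier (free_Abelian_group S)"
proof (induction M)
  case (add x M)
  then show ?case
    using keys_add[of "frag_of (snd x)" "signed_sum M"] keys_diff[of "signed_sum M" "frag_of (snd x)"]
    by (auto simp: keys_frag_of)
qed simp

lemma K0_rels_subset_carrier: "K0_rels A S \<subseteq> carrier (free_Abelian_group S)"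
proof
  fix r assume "r \<in> K0_rels A S"
  then obtain f g where r: "r = frag_of (cCod A f) - frag_of (cDom A f) - frag_of (cCod A g)"
    and "exact_in A S f g" by (auto simp: K0_rels_def)
  moreover have "Poly_Mapping.keys r \<subseteq> {cCod A f, cDom A f, cCod A g}"
    unfolding r using keys_diff[of "frag_of (cCod A f) - frag_of (cDom A f)" "frag_of (cCod A g)"]
      keys_diff[of "frag_of (cCod A f)" "frag_of (cDom A f)"] by (auto simp: keys_frag_of)
  ultimately show "r \<in> carrier (free_Abelian_group S)" by (auto simp: exact_in_def)
qed

lemma subgroup_K0_rel_subgroup: "subgroup (K0_rel_subgroup A S) (free_Abelian_group S)"
  unfolding K0_rel_subgroup_def
  by (rule group.generate_is_subgroup[OF group_free_Abelian_group K0_rels_subset_carrier])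

lemma K0_rel_subgroup_closed:
  "0 \<in> K0_rel_subgroup A S"
  "x \<in> K0_rel_subgroup A S \<Longrightarrow> y \<in> K0_rel_subgroup A S \<Longrightarrow> x + y \<in> K0_rel_subgroup A S"
  "x \<in> K0_rel_subgroup A S \<Longrightarrow> - x \<in> K0_rel_subgroup A S"
proof -
  interpret subgroup "K0_rel_subgroup A S" "free_Abelian_group S" by (rule subgroup_K0_rel_subgroup)
  show "0 \<in> K0_rel_subgroup A S" using one_closed by simp
  show "x \<in> K0_rel_subgroup A S \<Longrightarrow> y \<in> K0_rel_subgroup A S \<Longrightarrow> x + y \<in> K0_rel_subgroup A S"
    using m_closed by simp
  show "x \<in> K0_rel_subgroup A S \<Longrightarrow> - x \<in> K0_rel_subgroup A S"
    using m_inv_closed subset by fastforce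
qed

lemma K0_rel_subgroup_sum:
  "finite I \<Longrightarrow> (\<And>i. i \<in> I \<Longrightarrow> x i \<in> K0_rel_subgroup A S) \<Longrightarrow> sum x I \<in> K0_rel_subgroup A S"
  by (induction I rule: finite_induct) (auto intro: K0_rel_subgroup_closed)

lemma relation_in_K0_rel_subgroup:
  "exact_in A S f g \<Longrightarrow>
     frag_of (cCod A f) - frag_of (cDom A f) - frag_of (cCod A g) \<in> K0_rel_subgroup A S"
  unfolding K0_rel_subgroup_def by (rule generate.incl) (auto simp: K0_rels_def)

section \<open>Boundaries of 1-foams are relations\<close>

definition end_weight :: "('o, 'm) foam1 \<Rightarrow> nat \<times> bool \<Rightarrow> 'o \<Rightarrow>\<^sub>0 int" where
  "end_weight U eb = (if snd eb then frag_of (fFib U (fst eb)) else - frag_of (fFib U (fst eb)))"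

text \<open>Every edge has one head and one tail, contributing its fiber once with each sign.\<close>
lemma sum_end_weights_eq_zero:
  assumes "is_foam1 A S U"
  shows "(\<Sum>v\<in>fV U. sum (end_weight U) (ends_at U v)) = 0"
proof -
  let ?E = "fE U \<times> (UNIV :: bool set)"
  have fin: "finite ?E" "finite (fV U)" and "end_vertex U ` ?E \<subseteq> fV U"
    using assms by (auto simp: is_foam1_def end_vertex_def)
  then have "(\<Sum>v\<in>fV U. sum (end_weight U) {eb \<in> ?E. end_vertex U eb = v}) = sum (end_weight U) ?E"
    by (rule sum.group)
  moreover have "{eb \<in> ?E. end_vertex U eb = v} = ends_at U v" for v
    by (auto simp: ends_at_def)
  moreover have "sum (end_weight U) ?E = (\<Sum>e\<in>fE U. \<Sum>b\<in>UNIV. end_weight U (e, b))"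
    by (simp add: sum.cartesian_product)
  ultimately show ?thesis by (simp add: end_weight_def UNIV_bool)
qed

lemma signed_sum_foam_boundary:
  "signed_sum (foam_boundary U) = (\<Sum>v\<in>boundary_vertices U. sum (end_weight U) (ends_at U v))"
proof -
  have "signed_sum (foam_boundary U) = (\<Sum>v\<in>boundary_vertices U.
      (\<lambda>(s, X). if s then frag_of X else - frag_of X)
        (let eb = the_elem (ends_at U v) in (snd eb, fFib U (fst eb))))"
    unfolding signed_sum_def foam_boundary_def sum_unfold_sum_mset multiset.map_comp comp_def ..
  also have "\<dots> = (\<Sum>v\<in>boundary_vertices U. sum (end_weight U) (ends_at U v))"
  proof (rule sum.cong)
    fix v assume "v \<in> boundary_vertices U"
    then have "card (ends_at U v) = 1" by (simp add: boundary_vertices_def)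
    then obtain eb where "ends_at U v = {eb}" by (rule card_1_singletonE)
    then show "(\<lambda>(s, X). if s then frag_of X else - frag_of X)
        (let eb = the_elem (ends_at U v) in (snd eb, fFib U (fst eb))) = sum (end_weight U) (ends_at U v)"
      by (simp add: end_weight_def)
  qed simp
  finally show ?thesis .
qed

lemma sum_end_weights_trivalent_vertex:
  assumes "trivalent_vertex A S U v"
  shows "sum (end_weight U) (ends_at U v) \<in> K0_rel_subgroup A S"
proof -
  let ?r = "frag_of (cCod A (fF U v)) - frag_of (cDom A (fF U v)) - frag_of (cCod A (fG U v))"
  have r: "?r \<in> K0_rel_subgroup A S"
    using assms by (intro relation_in_K0_rel_subgroup) (simp add: trivalent_vertex_def)
  have sum_eq: "sum (end_weight U) (ends_at U v) = (if snd (fFirst U v) then - ?r else ?r)"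
    using assms by (auto simp: trivalent_vertex_def end_weight_def algebra_simps)
  show ?thesis
  proof (cases "snd (fFirst U v)")
    case True
    show ?thesis unfolding sum_eq if_P[OF True] by (rule K0_rel_subgroup_closed(3)[OF r])
  next
    case False
    show ?thesis unfolding sum_eq if_not_P[OF False] by (rule r)
  qed
qed

theorem signed_sum_foam_boundary_in_K0_rel_subgroup:
  assumes "is_foam1 A S U"
  shows "signed_sum (foam_boundary U) \<in> K0_rel_subgroup A S"
proof -
  have split: "fV U = boundary_vertices U \<union> interior_vertices U"
    using assms by (auto simp: is_foam1_def boundary_vertices_def interior_vertices_def)
  have disjoint: "boundary_vertices U \<inter> interior_vertices U = {}"
    by (auto simp: boundary_vertices_def interior_vertices_def)
  have fin: "finite (boundary_vertices U)" "finite (interior_vertices U)"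
    using assms by (auto simp: is_foam1_def boundary_vertices_def interior_vertices_def)
  have "signed_sum (foam_boundary U) + (\<Sum>v\<in>interior_vertices U. sum (end_weight U) (ends_at U v)) = 0"
    using sum_end_weights_eq_zero[OF assms]
    unfolding signed_sum_foam_boundary split sum.union_disjoint[OF fin disjoint] .
  then have "signed_sum (foam_boundary U) = - (\<Sum>v\<in>interior_vertices U. sum (end_weight U) (ends_at U v))"
    by (simp add: eq_neg_iff_add_eq_0)
  moreover have "(\<Sum>v\<in>interior_vertices U. sum (end_weight U) (ends_at U v)) \<in> K0_rel_subgroup A S"
    using assms by (intro K0_rel_subgroup_sum[OF fin(2)] sum_end_weights_trivalent_vertex)
      (simp add: is_foam1_iff)
  ultimately show ?thesis by (simp add: K0_rel_subgroup_closed)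
qed

section \<open>The isomorphism\<close>

lemma K0_rel_coset_eq:
  assumes "x \<in> carrier (free_Abelian_group S)" "y - x \<in> K0_rel_subgroup A S"
  shows "K0_rel_subgroup A S #>\<^bsub>free_Abelian_group S\<^esub> x = K0_rel_subgroup A S #>\<^bsub>free_Abelian_group S\<^esub> y"
proof -
  have "y \<in> K0_rel_subgroup A S #>\<^bsub>free_Abelian_group S\<^esub> x"
    unfolding r_coset_def using assms(2) by (auto intro!: bexI[of _ "y - x"])
  then show ?thesis
    by (rule group.repr_independence[OF group_free_Abelian_group _ assms(1) subgroup_K0_rel_subgroup])
qed

lemma gamma0_rep_cobordant:
  assumes "cobordant A S M N"
  shows "gamma0_rep A S M = gamma0_rep A S N"
proof -
  obtain U where "is_foam1 A S U" "foam_boundary U = N + neg_foam0 M"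
    using assms by (auto simp: cobordant_def)
  then have "signed_sum N - signed_sum M \<in> K0_rel_subgroup A S"
    using signed_sum_foam_boundary_in_K0_rel_subgroup by fastforce
  moreover have "signed_sum M \<in> carrier (free_Abelian_group S)"
    using assms by (intro signed_sum_in_carrier) (simp add: cobordant_def)
  ultimately show ?thesis by (simp add: gamma0_rep_eq K0_rel_coset_eq)
qed

lemma gamma0_rep_cob_equiv:
  assumes "cob_equiv A S M N"
  shows "gamma0_rep A S M = gamma0_rep A S N"
proof -
  have "equivclp (cobordant A S) M N" using assms by (simp add: cob_equiv_def)
  then show ?thesis
    by (induction rule: equivclp_induct) (auto dest: gamma0_rep_cobordant)
qed

lemma gamma0_cob_class: "valid_foam0 S M \<Longrightarrow> gamma0 A S (cob_class A S M) = gamma0_rep A S M"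
proof -
  assume "valid_foam0 S M"
  then have "gamma0_rep A S ` cob_class A S M = {gamma0_rep A S M}"
    by (auto simp: cob_class_def cob_equiv_refl gamma0_rep_cob_equiv)
  then show ?thesis by (simp add: gamma0_def)
qed

lemma K0_comm_group: "comm_group (K0 A S)"
  unfolding K0_eq
  by (rule comm_group.abelian_FactGroup[OF abelian_free_Abelian_group subgroup_K0_rel_subgroup])

lemma gamma0_hom: "gamma0 A S \<in> Group.hom (Cob0 A S) (K0 A S)"
proof (rule homI)
  fix x assume "x \<in> carrier (Cob0 A S)"
  then obtain M where "x = cob_class A S M" "valid_foam0 S M" by (auto simp: carrier_Cob0)
  then show "gamma0 A S x \<in> carrier (K0 A S)"
    by (auto simp: gamma0_cob_class gamma0_rep_eq K0_eq carrier_FactGroup intro!: imageI signed_sum_in_carrier)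
next
  fix x y assume "x \<in> carrier (Cob0 A S)" "y \<in> carrier (Cob0 A S)"
  then obtain M N where MN: "x = cob_class A S M" "y = cob_class A S N" "valid_foam0 S M" "valid_foam0 S N"
    by (auto simp: carrier_Cob0)
  interpret normal "K0_rel_subgroup A S" "free_Abelian_group S"
    by (rule comm_group.subgroup_imp_normal[OF abelian_free_Abelian_group subgroup_K0_rel_subgroup])
  show "gamma0 A S (x \<otimes>\<^bsub>Cob0 A S\<^esub> y) = gamma0 A S x \<otimes>\<^bsub>K0 A S\<^esub> gamma0 A S y"
    using MN rcos_sum[OF signed_sum_in_carrier[OF MN(3)] signed_sum_in_carrier[OF MN(4)]]
    by (simp add: Cob0_mult_cob_class gamma0_cob_class gamma0_rep_eq K0_eq)
qed

lemma signed_sum_surj: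
  assumes "x \<in> carrier (free_Abelian_group S)"
  shows "\<exists>M. valid_foam0 S M \<and> signed_sum M = x"
proof (rule free_Abelian_group_induct[where P = "\<lambda>x. \<exists>M. valid_foam0 S M \<and> signed_sum M = x"])
  show "Poly_Mapping.keys x \<subseteq> S" using assms by simp
  show "\<exists>M. valid_foam0 S M \<and> signed_sum M = 0" by (intro exI[of _ "{#}"]) simp
next
  fix y z assume "\<exists>M. valid_foam0 S M \<and> signed_sum M = y" "\<exists>M. valid_foam0 S M \<and> signed_sum M = z"
  then obtain M N where "valid_foam0 S M" "signed_sum M = y" "valid_foam0 S N" "signed_sum N = z"
    by blast
  then show "\<exists>M. valid_foam0 S M \<and> signed_sum M = y - z" by (intro exI[of _ "M + neg_foam0 N"]) simp
next
  fix X assume "X \<in> S"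
  then show "\<exists>M. valid_foam0 S M \<and> signed_sum M = frag_of X" by (intro exI[of _ "{#(True, X)#}"]) simp
qed

lemma gamma0_image: "gamma0 A S ` carrier (Cob0 A S) = carrier (K0 A S)"
proof
  show "gamma0 A S ` carrier (Cob0 A S) \<subseteq> carrier (K0 A S)"
    using gamma0_hom by (rule hom_carrier)
  show "carrier (K0 A S) \<subseteq> gamma0 A S ` carrier (Cob0 A S)"
  proof
    fix z assume "z \<in> carrier (K0 A S)"
    then obtain x where "x \<in> carrier (free_Abelian_group S)"
      "z = K0_rel_subgroup A S #>\<^bsub>free_Abelian_group S\<^esub> x"
      by (auto simp: K0_eq carrier_FactGroup)
    moreover obtain M where "valid_foam0 S M" "signed_sum M = x"
      using signed_sum_surj[OF \<open>x \<in> carrier (free_Abelian_group S)\<close>] by blast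
    ultimately have "z = gamma0 A S (cob_class A S M)" "cob_class A S M \<in> carrier (Cob0 A S)"
      by (auto simp: carrier_Cob0 gamma0_cob_class gamma0_rep_eq)
    then show "z \<in> gamma0 A S ` carrier (Cob0 A S)" by blast
  qed
qed

lemma hom_signed_sum_eq_cob_class:
  assumes hom: "\<psi> \<in> Group.hom (free_Abelian_group S) (Cob0 A S)"
    and gen: "\<And>X. X \<in> S \<Longrightarrow> \<psi> (frag_of X) = cob_class A S {#(True, X)#}"
    and "valid_foam0 S M"
  shows "\<psi> (signed_sum M) = cob_class A S M"
proof -
  interpret H: group_hom "free_Abelian_group S" "Cob0 A S" \<psi>
    using hom group_free_Abelian_group by (rule group_hom_Cob0)
  have point: "\<psi> (if s then frag_of X else - frag_of X) = cob_class A S {#(s, X)#}"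
    if "X \<in> S" for s X
  proof (cases s)
    case False
    have "\<psi> (- frag_of X) = inv\<^bsub>Cob0 A S\<^esub> \<psi> (frag_of X)"
      using H.hom_inv[of "frag_of X"] that by (simp add: keys_frag_of)
    then show ?thesis using False that by (simp add: gen Cob0_inv_cob_class)
  qed (simp add: gen that)
  show ?thesis
    using assms(3)
  proof (induction M)
    case empty
    then show ?case using H.hom_one by (simp add: one_Cob0)
  next
    case (add x M)
    obtain s X where x: "x = (s, X)" by fastforce
    with add.prems have X: "X \<in> S" and M: "valid_foam0 S M" by auto
    have w: "(if s then frag_of X else - frag_of X) \<in> carrier (free_Abelian_group S)"
      using X by (simp add: keys_frag_of)
    have "\<psi> (signed_sum (add_mset x M)) =
        \<psi> ((if s then frag_of X else - frag_of X) \<otimes>\<^bsub>free_Abelian_group S\<^esub> signed_sum M)"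
      using x by simp
    also have "\<dots> = cob_class A S {#x#} \<otimes>\<^bsub>Cob0 A S\<^esub> cob_class A S M"
      unfolding H.hom_mult[OF w signed_sum_in_carrier[OF M]] point[OF X] add.IH[OF M] x ..
    also have "\<dots> = cob_class A S (add_mset x M)"
      using X M x by (simp add: Cob0_mult_cob_class)
    finally show ?case .
  qed
qed

text \<open>A left inverse of gamma0 in the making: [X] goes to the one-point 0-foam (+, X).\<close>
lemma ex_hom_signed_sum_to_cob_class:
  "\<exists>\<psi> \<in> Group.hom (free_Abelian_group S) (Cob0 A S).
     \<forall>M. valid_foam0 S M \<longrightarrow> \<psi> (signed_sum M) = cob_class A S M"
proof -
  interpret comm_group "Cob0 A S" by (rule Cob0_comm_group)
  have "(\<lambda>X. cob_class A S {#(True, X)#}) ` S \<subseteq> carrier (Cob0 A S)"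
    by (auto simp: carrier_Cob0)
  then show ?thesis
  proof (rule free_Abelian_group_universal)
    fix \<psi> assume hom: "\<psi> \<in> Group.hom (free_Abelian_group S) (Cob0 A S)"
      and gen: "\<And>X. X \<in> S \<Longrightarrow> \<psi> (frag_of X) = cob_class A S {#(True, X)#}"
    then have "\<forall>M. valid_foam0 S M \<longrightarrow> \<psi> (signed_sum M) = cob_class A S M"
      using hom_signed_sum_eq_cob_class[OF hom gen] by blast
    with hom show ?thesis by blast
  qed
qed

lemma K0_rel_subgroup_subset_kernel:
  assumes hom: "\<psi> \<in> Group.hom (free_Abelian_group S) (Cob0 A S)"
    and \<psi>: "\<And>M. valid_foam0 S M \<Longrightarrow> \<psi> (signed_sum M) = cob_class A S M"
  shows "K0_rel_subgroup A S \<subseteq> kernel (free_Abelian_group S) (Cob0 A S) \<psi>"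
  unfolding K0_rel_subgroup_def
proof (rule group.generate_subgroup_incl[OF group_free_Abelian_group])
  show "subgroup (kernel (free_Abelian_group S) (Cob0 A S) \<psi>) (free_Abelian_group S)"
    using group_hom_Cob0[OF hom group_free_Abelian_group] by (rule group_hom.subgroup_kernel)
  show "K0_rels A S \<subseteq> kernel (free_Abelian_group S) (Cob0 A S) \<psi>"
  proof
    fix r assume r: "r \<in> K0_rels A S"
    then obtain f g where r_eq: "r = frag_of (cCod A f) - frag_of (cDom A f) - frag_of (cCod A g)"
      and fg: "exact_in A S f g" by (auto simp: K0_rels_def)
    let ?M = "{#(False, cDom A f), (True, cCod A f), (False, cCod A g)#}"
    have M: "valid_foam0 S ?M" using fg by (simp add: exact_in_def)
    have "cobordant A S {#} ?M"
      using M is_foam1_tripod_foam[OF fg] foam_boundary_tripod_foam[of A f g] by (auto simp: cobordant_def)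
    then have "cob_class A S ?M = \<one>\<^bsub>Cob0 A S\<^esub>"
      using M by (simp add: one_Cob0 cob_class_eq_iff cob_equiv_sym cob_equiv_of_cobordant)
    moreover have "signed_sum ?M = r" by (simp add: r_eq)
    ultimately have "\<psi> r = \<one>\<^bsub>Cob0 A S\<^esub>" using \<psi>[OF M] by simp
    moreover have "r \<in> carrier (free_Abelian_group S)" using K0_rels_subset_carrier r by blast
    ultimately show "r \<in> kernel (free_Abelian_group S) (Cob0 A S) \<psi>" by (simp add: kernel_def)
  qed
qed

lemma gamma0_inj_on:
  fixes A :: "('o, 'm) cat"
  shows "inj_on (gamma0 A S) (carrier (Cob0 A S))"
proof (rule inj_onI)
  obtain \<psi> where hom: "\<psi> \<in> Group.hom (free_Abelian_group S) (Cob0 A S)"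
    and \<psi>: "\<And>M. valid_foam0 S M \<Longrightarrow> \<psi> (signed_sum M) = cob_class A S M"
    using ex_hom_signed_sum_to_cob_class[of S A] by blast
  interpret group_hom "free_Abelian_group S" "Cob0 A S" \<psi>
    using hom group_free_Abelian_group by (rule group_hom_Cob0)
  fix x y assume "x \<in> carrier (Cob0 A S)" "y \<in> carrier (Cob0 A S)" "gamma0 A S x = gamma0 A S y"
  then obtain M N where MN: "x = cob_class A S M" "y = cob_class A S N" "valid_foam0 S M" "valid_foam0 S N"
    and eq: "K0_rel_subgroup A S #>\<^bsub>free_Abelian_group S\<^esub> signed_sum M =
      K0_rel_subgroup A S #>\<^bsub>free_Abelian_group S\<^esub> signed_sum N"
    by (auto simp: carrier_Cob0 gamma0_cob_class gamma0_rep_eq)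
  have N: "signed_sum N \<in> carrier (free_Abelian_group S)"
    using MN(4) by (rule signed_sum_in_carrier)
  have "signed_sum M \<in> K0_rel_subgroup A S #>\<^bsub>free_Abelian_group S\<^esub> signed_sum N"
    using eq group.rcos_self[OF group_free_Abelian_group signed_sum_in_carrier[OF MN(3)]
        subgroup_K0_rel_subgroup[of A S]]
    by simp
  then obtain h where h: "h \<in> K0_rel_subgroup A S" "signed_sum M = h + signed_sum N"
    by (auto simp: r_coset_def)
  then have "h \<in> carrier (free_Abelian_group S)" "\<psi> h = \<one>\<^bsub>Cob0 A S\<^esub>"
    using K0_rel_subgroup_subset_kernel[OF hom \<psi>] by (auto simp: kernel_def)
  then have "\<psi> (signed_sum M) = \<psi> (signed_sum N)"
    using h(2) hom_mult[OF _ N] hom_closed[OF N] by simp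
  then show "x = y" using \<psi> MN by simp
qed

theorem mainTheorem5:
  fixes A :: "('o, 'm) cat" and S :: "'o set"
  assumes "exact_category A S"
  shows "(\<forall>M N. cob_equiv A S M N \<longrightarrow> gamma0_rep A S M = gamma0_rep A S N) \<and>
         comm_group (Cob0 A S) \<and> comm_group (K0 A S) \<and>
         gamma0 A S \<in> iso (Cob0 A S) (K0 A S)"
proof -
  have "gamma0 A S \<in> iso (Cob0 A S) (K0 A S)"
    using gamma0_hom[of A S] gamma0_image[of A S] gamma0_inj_on[of A S] by (simp add: iso_iff)
  then show ?thesis
    using gamma0_rep_cob_equiv[of A S] Cob0_comm_group[of A S] K0_comm_group[of A S] by blast
qed

end
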